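(* Under the hypotheses of Theorem 1, and assuming moreover $W_u[0]>\tau/(1-\sigma f)$, with the user following $\pi_u$ and the adversary following $\pi_a$ in a game with unboundedly many epochs, the fraction of user MEV transactions that are front-run during epoch $e$, namely $$\frac{\lfloor \tilde W_a[e-1]/y\rfloor}{\lceil (\tilde W_u[e-1]-\tau)/y\rceil},$$ tends to $0$ as $e\to\infty$.
   Context: Token game (Masquerade model). Discrete rounds; a user and an adversary with initial wealths $W_u[0]$, $W_a[0]$; token cost $y>0$, MEV profit $\eta>0$, front-run fraction $f\in(0,1)$, user threshold $\tau>0$. Tokens cost $y$, have numbers increasing in purchase order, never expire, are single-use, and are refunded $y$ when used. Each round the user makes at most one tokenized MEV transaction with token $T_u$; it is front-run iff the adversary uses a token $T_a<T_u$; front-run: user earns $\eta-f\eta$, adversary $f\eta$; otherwise user earns $\eta$, adversary $0$. User policy $\pi_u$: each round buy one token if available wealth exceeds $y$; if available wealth $\le\tau$, make a tokenized MEV transaction with its lowest unused token. Adversary policy $\pi_a$: knows the user's tokens; each round buys $\lfloor (\text{available wealth})/y\rfloor$ tokens, purchases ordered before the user's; front-runs each user transaction with its largest unused token below $T_u$ if one exists. Epochs: the first ends when the user's available wealth drops below $\tau$; each later epoch ends once the user has used all tokens bought in the previous epoch and its available wealth drops below $\tau$. During epoch $e$ the user makes $\lceil (\tilde W_u[e-1]-\tau)/y\rceil$ MEV transactions and the adversary front-runs $\lfloor \tilde W_a[e-1]/y\rfloor$ of them. $\tilde W_a[e]$, $\tilde W_u[e]$: total wealth (available plus locked in tokens)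 at end of epoch $e$, with $\tilde W_a[0]=W_a[0]$, $\tilde W_u[0]=W_u[0]$. Theorem 1 hypotheses: $0<\sigma<1/2$, $\epsilon<\frac{yf+f^2\eta}{\eta(1-f)}$, $W_a[0]<\sigma W_u[0]$, $f<\frac{1-\sigma-\epsilon}{1+\sigma}$, $W_a[0]>\frac{y^2}{\eta\epsilon}$, $\tau<\epsilon W_u[0]$. *)

theory Defs
  imports Complex_Main
begin

text \<open>Tokens are refunded when used, so total wealth (available plus locked in tokens) changes only
  through MEV profits. During epoch e the user makes ceil((Wu[e-1]-tau)/y) MEV transactions
  and the adversary front-runs floor(Wa[e-1]/y) of them; each front-run transaction gives the
  user eta - f*eta and the adversary f*eta, each other one gives the user eta.
  epoch_wealth y eta f tau Wu0 Wa0 e = (total user wealth, total adversary wealth) at the end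
  of epoch e, with epoch 0 meaning the initial state.\<close>

fun epoch_wealth :: "real \<Rightarrow> real \<Rightarrow> real \<Rightarrow> real \<Rightarrow> real \<Rightarrow> real \<Rightarrow> nat \<Rightarrow> real \<times> real" where
  "epoch_wealth y eta f tau Wu0 Wa0 0 = (Wu0, Wa0)"
| "epoch_wealth y eta f tau Wu0 Wa0 (Suc e) =
     (let wu = fst (epoch_wealth y eta f tau Wu0 Wa0 e);
          wa = snd (epoch_wealth y eta f tau Wu0 Wa0 e);
          nu = \<lceil>(wu - tau) / y\<rceil>;
          na = \<lfloor>wa / y\<rfloor>
      in (wu + of_int nu * eta - of_int na * (f * eta), wa + of_int na * (f * eta)))"

definition Wu_tilde :: "real \<Rightarrow> real \<Rightarrow> real \<Rightarrow> real \<Rightarrow> real \<Rightarrow> real \<Rightarrow> nat \<Rightarrow> real" where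
  "Wu_tilde y eta f tau Wu0 Wa0 e = fst (epoch_wealth y eta f tau Wu0 Wa0 e)"

definition Wa_tilde :: "real \<Rightarrow> real \<Rightarrow> real \<Rightarrow> real \<Rightarrow> real \<Rightarrow> real \<Rightarrow> nat \<Rightarrow> real" where
  "Wa_tilde y eta f tau Wu0 Wa0 e = snd (epoch_wealth y eta f tau Wu0 Wa0 e)"

end

theory Submission
  imports Defs
begin

text \<open>Each epoch multiplies the user's excess wealth over the threshold \<open>\<tau>/(1 - \<sigma> f)\<close> by at
  least \<open>1 + \<eta>(1 - \<sigma> f)/y\<close>, as long as the adversary holds at most a \<open>\<sigma>\<close>-fraction of the
  user's wealth, while the adversary's wealth grows by a factor of at most \<open>1 + f \<eta>/y\<close>.
  The hypotheses make the first factor larger and keep the \<open>\<sigma>\<close>-fraction invariant, so the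
  number of front-runs divided by the number of user transactions decays geometrically.\<close>

lemma Wu_tilde_0 [simp]: "Wu_tilde y eta f tau Wu0 Wa0 0 = Wu0"
  and Wa_tilde_0 [simp]: "Wa_tilde y eta f tau Wu0 Wa0 0 = Wa0"
  by (simp_all add: Wu_tilde_def Wa_tilde_def)

lemma Wu_tilde_Suc:
  "Wu_tilde y eta f tau Wu0 Wa0 (Suc n) =
     Wu_tilde y eta f tau Wu0 Wa0 n
     + of_int \<lceil>(Wu_tilde y eta f tau Wu0 Wa0 n - tau) / y\<rceil> * eta
     - of_int \<lfloor>Wa_tilde y eta f tau Wu0 Wa0 n / y\<rfloor> * (f * eta)"
  by (simp add: Wu_tilde_def Wa_tilde_def Let_def)

lemma Wa_tilde_Suc:
  "Wa_tilde y eta f tau Wu0 Wa0 (Suc n) =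
     Wa_tilde y eta f tau Wu0 Wa0 n + of_int \<lfloor>Wa_tilde y eta f tau Wu0 Wa0 n / y\<rfloor> * (f * eta)"
  by (simp add: Wu_tilde_def Wa_tilde_def Let_def)

lemma floor_divide_ceiling_le:
  fixes p q y :: real
  assumes "0 \<le> p" and "0 < q" and "0 < y"
  shows "of_int \<lfloor>p / y\<rfloor> / of_int \<lceil>q / y\<rceil> \<le> p / q"
proof -
  have "of_int \<lfloor>p / y\<rfloor> / of_int \<lceil>q / y\<rceil> \<le> (p / y) / (q / y)"
    by (rule frac_le) (use assms in \<open>auto intro: divide_nonneg_pos\<close>)
  then show ?thesis
    using assms by simp
qed

locale masquerade_epochs =
  fixes y eta f tau \<sigma> Wu0 Wa0 :: real
  assumes y_pos: "0 < y" and eta_pos: "0 < eta" and f_nonneg: "0 \<le> f"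
    and sigma_nonneg: "0 \<le> \<sigma>" and tau_pos: "0 < tau"
    and Wu0_pos: "0 < Wu0" and Wa0_nonneg: "0 \<le> Wa0" and Wa0_le: "Wa0 \<le> \<sigma> * Wu0"
    and tau_lt_Wu0: "tau < (1 - (1 + \<sigma>) * f) * Wu0"
begin

abbreviation Wu :: "nat \<Rightarrow> real" where "Wu \<equiv> Wu_tilde y eta f tau Wu0 Wa0"
abbreviation Wa :: "nat \<Rightarrow> real" where "Wa \<equiv> Wa_tilde y eta f tau Wu0 Wa0"

definition user_rate :: real where "user_rate = eta * (1 - \<sigma> * f) / y"
definition adversary_rate :: real where "adversary_rate = f * eta / y"
definition growth_threshold :: real where "growth_threshold = tau / (1 - \<sigma> * f)"

lemma front_run_coefficient_pos: "0 < 1 - (1 + \<sigma>) * f"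
  using tau_lt_Wu0 tau_pos Wu0_pos by (smt (verit) mult_nonpos_nonneg)

lemma sigma_f_lt_1: "\<sigma> * f < 1"
  using front_run_coefficient_pos f_nonneg by (simp add: algebra_simps)

lemma user_rate_pos: "0 < user_rate"
  using eta_pos y_pos sigma_f_lt_1 by (simp add: user_rate_def)

lemma adversary_rate_nonneg: "0 \<le> adversary_rate"
  using eta_pos y_pos f_nonneg by (simp add: adversary_rate_def)

lemma adversary_rate_lt_user_rate: "adversary_rate < user_rate"
proof -
  have "f < 1 - \<sigma> * f"
    using front_run_coefficient_pos by (simp add: algebra_simps)
  then have "f * eta < (1 - \<sigma> * f) * eta"
    using eta_pos by (rule mult_strict_right_mono)
  then show ?thesis
    using y_pos by (simp add: adversary_rate_def user_rate_def divide_strict_right_mono mult.commute)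
qed

lemma tau_le_growth_threshold: "tau \<le> growth_threshold"
  using tau_pos sigma_f_lt_1 sigma_nonneg f_nonneg
  by (simp add: growth_threshold_def le_divide_eq)

lemma growth_threshold_lt_Wu0: "growth_threshold < Wu0"
proof -
  have "tau < (1 - \<sigma> * f) * Wu0"
    using tau_lt_Wu0 Wu0_pos f_nonneg by (smt (verit) mult_right_mono)
  then show ?thesis
    using sigma_f_lt_1 by (simp add: growth_threshold_def divide_less_eq mult.commute)
qed

lemma user_gain_ge: "(Wu n - tau) / y * eta \<le> of_int \<lceil>(Wu n - tau) / y\<rceil> * eta"
  using eta_pos by (intro mult_right_mono) auto

lemma front_run_loss_le: "of_int \<lfloor>Wa n / y\<rfloor> * (f * eta) \<le> Wa n / y * (f * eta)"
  using eta_pos f_nonneg by (intro mult_right_mono) auto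

lemma Wa_nonneg: "0 \<le> Wa n"
  by (induction n) (use Wa0_nonneg y_pos f_nonneg eta_pos in \<open>auto simp: Wa_tilde_Suc\<close>)

lemma Wa_Suc_le: "Wa (Suc n) \<le> (1 + adversary_rate) * Wa n"
  using front_run_loss_le[of n] by (simp add: Wa_tilde_Suc adversary_rate_def algebra_simps)

text \<open>The threshold is the fixed point of \<open>u \<mapsto> (1 + user_rate) u - \<tau> \<eta> / y\<close>, the worst-case
  epoch update of the user's wealth.\<close>

lemma Wu_Suc_excess_ge:
  assumes "Wa n \<le> \<sigma> * Wu n"
  shows "(1 + user_rate) * (Wu n - growth_threshold) \<le> Wu (Suc n) - growth_threshold"
proof -
  have "Wa n / y * (f * eta) \<le> \<sigma> * Wu n / y * (f * eta)"
    using assms f_nonneg eta_pos y_pos by (intro mult_right_mono divide_right_mono) auto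
  then have "Wu n + (Wu n - tau) / y * eta - \<sigma> * Wu n / y * (f * eta) \<le> Wu (Suc n)"
    using user_gain_ge[of n] front_run_loss_le[of n] by (simp add: Wu_tilde_Suc)
  also have "Wu n + (Wu n - tau) / y * eta - \<sigma> * Wu n / y * (f * eta)
             = (1 + user_rate) * Wu n - tau * eta / y"
    using y_pos by (simp add: user_rate_def field_simps)
  also have "tau * eta / y = user_rate * growth_threshold"
    using sigma_f_lt_1 y_pos by (simp add: user_rate_def growth_threshold_def field_simps)
  finally show ?thesis
    by (simp add: algebra_simps)
qed

lemma Wa_Suc_le_share:
  assumes share: "Wa n \<le> \<sigma> * Wu n" and margin: "tau \<le> (1 - (1 + \<sigma>) * f) * Wu n"
  shows "Wa (Suc n) \<le> \<sigma> * Wu (Suc n)"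
proof -
  let ?u = "Wu n" and ?v = "Wa n"
  have "\<sigma> * ((?u - tau) / y * eta) - (1 + \<sigma>) * (?v / y * (f * eta))
        \<le> \<sigma> * (of_int \<lceil>(?u - tau) / y\<rceil> * eta) - (1 + \<sigma>) * (of_int \<lfloor>?v / y\<rfloor> * (f * eta))"
    using user_gain_ge[of n] front_run_loss_le[of n] sigma_nonneg
    by (smt (verit) mult_left_mono)
  also have "\<dots> = (\<sigma> * Wu (Suc n) - Wa (Suc n)) - (\<sigma> * ?u - ?v)"
    by (simp add: Wu_tilde_Suc Wa_tilde_Suc algebra_simps)
  finally have "\<sigma> * ?u - ?v + \<sigma> * ((?u - tau) / y * eta) - (1 + \<sigma>) * (?v / y * (f * eta))
                \<le> \<sigma> * Wu (Suc n) - Wa (Suc n)"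
    by simp
  moreover have "\<sigma> * ?u - ?v + \<sigma> * ((?u - tau) / y * eta) - (1 + \<sigma>) * (?v / y * (f * eta))
        = (\<sigma> * ?u - ?v) * (1 + (1 + \<sigma>) * f * eta / y)
          + \<sigma> * eta / y * ((1 - (1 + \<sigma>) * f) * ?u - tau)"
    using y_pos by (simp add: field_simps)
  moreover have "0 \<le> (\<sigma> * ?u - ?v) * (1 + (1 + \<sigma>) * f * eta / y)"
    using share sigma_nonneg f_nonneg eta_pos y_pos by simp
  moreover have "0 \<le> \<sigma> * eta / y * ((1 - (1 + \<sigma>) * f) * ?u - tau)"
    using margin sigma_nonneg eta_pos y_pos by simp
  ultimately show ?thesis
    by linarith
qed

lemma epoch_invariant: "Wu0 \<le> Wu n \<and> Wa n \<le> \<sigma> * Wu n"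
proof (induction n)
  case 0
  then show ?case using Wa0_le by simp
next
  case (Suc n)
  then have "tau \<le> (1 - (1 + \<sigma>) * f) * Wu n"
    using tau_lt_Wu0 front_run_coefficient_pos by (smt (verit) mult_left_mono)
  then have "Wa (Suc n) \<le> \<sigma> * Wu (Suc n)"
    using Suc.IH Wa_Suc_le_share by blast
  moreover have "Wu n - growth_threshold \<le> (1 + user_rate) * (Wu n - growth_threshold)"
    using Suc.IH growth_threshold_lt_Wu0 user_rate_pos by (simp add: algebra_simps)
  ultimately show ?case
    using Suc.IH Wu_Suc_excess_ge[of n] by linarith
qed

lemma Wa_le_geometric: "Wa n \<le> (1 + adversary_rate) ^ n * Wa0"
proof (induction n)
  case (Suc n)
  have "Wa (Suc n) \<le> (1 + adversary_rate) * Wa n"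
    by (rule Wa_Suc_le)
  also have "\<dots> \<le> (1 + adversary_rate) * ((1 + adversary_rate) ^ n * Wa0)"
    using Suc.IH adversary_rate_nonneg by (intro mult_left_mono) auto
  finally show ?case by simp
qed simp

lemma Wu_excess_ge_geometric:
  "(1 + user_rate) ^ n * (Wu0 - growth_threshold) \<le> Wu n - growth_threshold"
proof (induction n)
  case (Suc n)
  have "(1 + user_rate) ^ Suc n * (Wu0 - growth_threshold)
        \<le> (1 + user_rate) * (Wu n - growth_threshold)"
    using Suc.IH user_rate_pos by (simp add: mult.assoc mult_left_mono)
  also have "\<dots> \<le> Wu (Suc n) - growth_threshold"
    using Wu_Suc_excess_ge epoch_invariant by blast
  finally show ?case .
qed simp

lemma front_run_fraction_le_geometric:
  "of_int \<lfloor>Wa n / y\<rfloor> / of_int \<lceil>(Wu n - tau) / y\<rceil>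
     \<le> Wa0 / (Wu0 - growth_threshold) * ((1 + adversary_rate) / (1 + user_rate)) ^ n"
proof -
  have excess_pos: "0 < (1 + user_rate) ^ n * (Wu0 - growth_threshold)"
    using user_rate_pos growth_threshold_lt_Wu0 by simp
  have excess_le: "(1 + user_rate) ^ n * (Wu0 - growth_threshold) \<le> Wu n - tau"
    using Wu_excess_ge_geometric[of n] tau_le_growth_threshold by linarith
  have "of_int \<lfloor>Wa n / y\<rfloor> / of_int \<lceil>(Wu n - tau) / y\<rceil> \<le> Wa n / (Wu n - tau)"
    using Wa_nonneg excess_pos excess_le y_pos by (intro floor_divide_ceiling_le) auto
  also have "\<dots> \<le> ((1 + adversary_rate) ^ n * Wa0) / ((1 + user_rate) ^ n * (Wu0 - growth_threshold))"
    using Wa_le_geometric Wa_nonneg excess_pos excess_le Wa0_nonneg adversary_rate_nonneg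
    by (intro frac_le) auto
  also have "\<dots> = Wa0 / (Wu0 - growth_threshold) * ((1 + adversary_rate) / (1 + user_rate)) ^ n"
    by (simp add: power_divide ac_simps)
  finally show ?thesis .
qed

lemma front_run_fraction_nonneg: "(0::real) \<le> of_int \<lfloor>Wa n / y\<rfloor> / of_int \<lceil>(Wu n - tau) / y\<rceil>"
proof -
  have "0 < (1 + user_rate) ^ n * (Wu0 - growth_threshold)"
    using user_rate_pos growth_threshold_lt_Wu0 by simp
  then have "0 < (Wu n - tau) / y"
    using Wu_excess_ge_geometric[of n] tau_le_growth_threshold y_pos by simp
  then show ?thesis
    using Wa_nonneg[of n] y_pos by (intro divide_nonneg_pos) auto
qed

theorem front_run_fraction_tendsto_zero:
  "(\<lambda>n. of_int \<lfloor>Wa n / y\<rfloor> / of_int \<lceil>(Wu n - tau) / y\<rceil>) \<longlonglongrightarrow> (0::real)"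
proof (rule tendsto_sandwich[OF _ _ tendsto_const])
  show "(\<lambda>n. Wa0 / (Wu0 - growth_threshold) * ((1 + adversary_rate) / (1 + user_rate)) ^ n)
             \<longlonglongrightarrow> 0"
    using adversary_rate_nonneg adversary_rate_lt_user_rate
    by (intro tendsto_mult_right_zero LIMSEQ_power_zero) auto
qed (use front_run_fraction_nonneg front_run_fraction_le_geometric in auto)

end

theorem theorem2:
  fixes y eta f tau Wu0 Wa0 \<sigma> \<epsilon> :: real
  assumes "y > 0" and "eta > 0" and "0 < f" and "f < 1" and "tau > 0"
    and "0 < \<sigma>" and "\<sigma> < 1/2"
    and "\<epsilon> < (y * f + f\<^sup>2 * eta) / (eta * (1 - f))"
    and "Wa0 < \<sigma> * Wu0"
    and "f < (1 - \<sigma> - \<epsilon>) / (1 + \<sigma>)"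
    and "Wa0 > y\<^sup>2 / (eta * \<epsilon>)"
    and "tau < \<epsilon> * Wu0"
    and "Wu0 > tau / (1 - \<sigma> * f)"
  shows "(\<lambda>e. of_int \<lfloor>Wa_tilde y eta f tau Wu0 Wa0 (e - 1) / y\<rfloor>
              / of_int \<lceil>(Wu_tilde y eta f tau Wu0 Wa0 (e - 1) - tau) / y\<rceil>)
         \<longlonglongrightarrow> (0::real)"
proof -
  have "\<sigma> * f < 1"
    using mult_strict_left_mono[OF assms(4,6)] assms(7) by simp
  then have Wu0_pos: "0 < Wu0"
    using assms(5,13) by (smt (verit) divide_pos_pos)
  have "0 < \<epsilon>"
    using assms(5,12) Wu0_pos by (smt (verit) mult_nonpos_nonneg)
  then have Wa0_pos: "0 < Wa0"
    using assms(1,2,11) by (smt (verit) divide_pos_pos mult_pos_pos zero_less_power)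
  have "(1 + \<sigma>) * f < 1 - \<sigma> - \<epsilon>"
    using assms(6,10) by (simp add: pos_less_divide_eq mult.commute)
  then have "\<epsilon> * Wu0 \<le> (1 - (1 + \<sigma>) * f) * Wu0"
    using assms(6) Wu0_pos by (intro mult_right_mono) auto
  then have "tau < (1 - (1 + \<sigma>) * f) * Wu0"
    using assms(12) by linarith
  then interpret masquerade_epochs y eta f tau \<sigma> Wu0 Wa0
    using assms(1,2,3,5,6,9) Wu0_pos Wa0_pos by unfold_locales auto
  show ?thesis
    by (rule LIMSEQ_imp_Suc) (simp add: front_run_fraction_tendsto_zero)
qed

end
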